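(* Let $\lambda\in(0,1]$ and let $F$ be a $\lambda$-regular distribution of a nonnegative random variable $X$ with finite mean $\mu>0$. Then posting the price $\mu$ satisfies \[\frac{\mathrm{OPT}(F)}{\mathrm{REV}(\mu;F)}\le(1-\lambda)^{-1/\lambda},\] where the right-hand side is interpreted as $+\infty$ for $\lambda=1$.
   Context: A continuous distribution $F$ with density $f$, supported on an interval $D_F$ of nonnegative reals, is $\lambda$-regular ($\lambda\in[0,1]$) if $\phi_\lambda(x)=\lambda x-\frac{1-F(x)}{f(x)}$ is nondecreasing on $D_F$. For a price $p\ge0$, $\mathrm{REV}(p;F)=p\Pr[X\ge p]$, and $\mathrm{OPT}(F)=\sup_{p\ge0}\mathrm{REV}(p;F)$ is the optimal revenue from selling one item to one buyer with value $X\sim F$. *)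

theory Defs
  imports "HOL-Probability.Probability"
begin

definition dist_of :: "(real \<Rightarrow> real) \<Rightarrow> real measure" where
  "dist_of f = density lborel (\<lambda>x. ennreal (f x))"

definition cdf_of :: "(real \<Rightarrow> real) \<Rightarrow> real \<Rightarrow> real" where
  "cdf_of f x = measure (dist_of f) {..x}"

definition REV :: "(real \<Rightarrow> real) \<Rightarrow> real \<Rightarrow> real" where
  "REV f p = p * measure (dist_of f) {p..}"

definition OPT :: "(real \<Rightarrow> real) \<Rightarrow> real" where
  "OPT f = (SUP p\<in>{0..}. REV f p)"

definition lambda_regular :: "real \<Rightarrow> (real \<Rightarrow> real) \<Rightarrow> real set \<Rightarrow> bool" where
  "lambda_regular lam f D = mono_on D (\<lambda>x. lam * x - (1 - cdf_of f x) / f x)"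

end

theory Submission
  imports Defs
begin

(*
  Write S t = Pr[X >= t] and let l t = S mu / f mu + lam (t - mu) be the tangent line of the
  lam-virtual value at the mean mu (which lies in the support). Regularity says S / f >= l to the
  left of mu and S / f <= l to the right, i.e. (ln S)' >= - 1 / l resp. <= - 1 / l, while
  (ln l)' = lam / l. Hence lam ln S + ln l is maximal at mu, that is
  S t <= (P / l t) powr (1 / lam) with P = S mu powr lam * l mu. Integrating this tail bound,
  mu = int_0^oo S <= x0 + P / (1 - lam) where l x0 = P, which rearranges to S mu powr lam >= 1 - lam.
  Finally OPT <= mu by Markov's inequality and REV mu = mu * S mu.

  Since f is only measurable, S need not be differentiable: the differential inequalities are
  used in the integrated form S y - S z ~ (z - y) f, and monotonicity of lam ln S + ln l follows
  from its decrements being quadratically small on short intervals.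
*)

lemma le_if_local_decrease_quadratic:
  fixes g :: "real \<Rightarrow> real"
  assumes "p \<le> q" and "0 < \<eta>"
    and local: "\<And>y z. p \<le> y \<Longrightarrow> y \<le> z \<Longrightarrow> z \<le> q \<Longrightarrow> z - y \<le> \<eta> \<Longrightarrow>
                  g y - g z \<le> K * (z - y)\<^sup>2"
  shows "g p \<le> g q"
proof -
  have telescope: "g p - g (p + real k * d) \<le> real k * K * d\<^sup>2"
    if "0 \<le> d" "d \<le> \<eta>" "p + real k * d \<le> q" for k d
    using that(3)
  proof (induction k)
    case (Suc k)
    have "p + real k * d \<le> q" using Suc.prems \<open>0 \<le> d\<close> by (simp add: algebra_simps)
    with Suc.IH have "g p - g (p + real k * d) \<le> real k * K * d\<^sup>2" .
    moreover have "g (p + real k * d) - g (p + real (Suc k) * d) \<le> K * d\<^sup>2"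
      using local[of "p + real k * d" "p + real (Suc k) * d"] Suc.prems that(1,2)
      by (simp add: algebra_simps)
    ultimately show ?case by (simp add: algebra_simps)
  qed simp
  have partition: "g p - g q \<le> K * (q - p)\<^sup>2 / real n" if "(q - p) / \<eta> \<le> real n" "0 < n" for n
  proof -
    define d where "d = (q - p) / real n"
    have "d \<le> \<eta>" using that \<open>0 < \<eta>\<close> by (simp add: d_def field_simps)
    moreover have "p + real n * d = q" using \<open>0 < n\<close> by (simp add: d_def)
    ultimately have "g p - g q \<le> real n * K * d\<^sup>2"
      using telescope[of d n] \<open>p \<le> q\<close> by (simp add: d_def)
    also have "\<dots> = K * (q - p)\<^sup>2 / real n" using \<open>0 < n\<close> by (simp add: d_def power2_eq_square)
    finally show ?thesis .
  qed
  have "eventually (\<lambda>n. g p - g q \<le> K * (q - p)\<^sup>2 / real n) sequentially"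
    using filterlim_real_sequentially[unfolded filterlim_at_top, rule_format, of "(q - p) / \<eta>"]
      eventually_gt_at_top[of 0]
    by eventually_elim (use partition in blast)
  from tendsto_lowerbound[OF lim_const_over_n this] show ?thesis by simp
qed

lemma tangent_log_step:
  fixes S l :: "real \<Rightarrow> real"
  assumes lam: "0 < lam" "lam \<le> 1" and "0 < S a" "0 < l a" and "\<bar>b - a\<bar> \<le> l a / 2"
    and S_step: "S a * (1 - (b - a) / l a) \<le> S b" and l_step: "l b = l a + lam * (b - a)"
  shows "lam * ln (S a) + ln (l a) \<le> lam * ln (S b) + ln (l b) + 4 * ((b - a) / l a)\<^sup>2"
proof -
  define \<delta> where "\<delta> = (b - a) / l a"
  have "\<bar>\<delta>\<bar> = \<bar>b - a\<bar> / l a" using assms(4) by (simp add: \<delta>_def)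
  also have "\<dots> \<le> 1/2" using assms(4,5) by (simp add: pos_divide_le_eq)
  finally have "\<bar>- \<delta>\<bar> \<le> 1/2" "\<bar>lam * \<delta>\<bar> \<le> 1/2"
    using lam mult_mono[of lam 1 "\<bar>\<delta>\<bar>" "1/2"] by (auto simp: abs_mult)
  then have ln_minus: "- \<delta> - 2 * \<delta>\<^sup>2 \<le> ln (1 - \<delta>)"
    and ln_plus: "lam * \<delta> - 2 * (lam * \<delta>)\<^sup>2 \<le> ln (1 + lam * \<delta>)"
    using abs_ln_one_plus_x_minus_x_bound[of "- \<delta>"] abs_ln_one_plus_x_minus_x_bound[of "lam * \<delta>"]
    by (auto simp: power2_eq_square)
  have pos: "0 < 1 - \<delta>" "0 < 1 + lam * \<delta>"
    using \<open>\<bar>- \<delta>\<bar> \<le> 1/2\<close> \<open>\<bar>lam * \<delta>\<bar> \<le> 1/2\<close> by auto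
  have "ln (S a) + ln (1 - \<delta>) = ln (S a * (1 - \<delta>))" using assms(3) pos by (simp add: ln_mult)
  also have "\<dots> \<le> ln (S b)" using assms(3) S_step pos by (intro ln_mono) (auto simp: \<delta>_def)
  finally have ln_S: "ln (S a) + ln (1 - \<delta>) \<le> ln (S b)" .
  have "l b = l a * (1 + lam * \<delta>)" using assms(4) l_step by (simp add: \<delta>_def distrib_left)
  then have ln_l: "ln (l b) = ln (l a) + ln (1 + lam * \<delta>)" using assms(4) pos by (simp add: ln_mult)
  have "lam * \<delta>\<^sup>2 \<le> \<delta>\<^sup>2" "lam\<^sup>2 * \<delta>\<^sup>2 \<le> \<delta>\<^sup>2"
    using lam by (auto intro: mult_left_le_one_le simp: power_le_one)
  \<comment> \<open>the first-order terms of \<open>lam * ln (1 - \<delta>)\<close> and \<open>ln (1 + lam * \<delta>)\<close> cancel\<close>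
  then show ?thesis
    using ln_plus ln_l mult_left_mono[OF ln_S, of lam] mult_left_mono[OF ln_minus, of lam] lam
    by (simp add: \<delta>_def[symmetric] algebra_simps power_mult_distrib)
qed

lemma log_tangent_mono_left:
  fixes S l :: "real \<Rightarrow> real"
  assumes lam: "0 < lam" "lam \<le> 1" and "p \<le> q" and "0 < l p"
    and l_affine: "\<And>y z. l z = l y + lam * (z - y)"
    and S_pos: "\<And>t. p \<le> t \<Longrightarrow> t \<le> q \<Longrightarrow> 0 < S t"
    and decrement: "\<And>y z. p \<le> y \<Longrightarrow> y \<le> z \<Longrightarrow> z \<le> q \<Longrightarrow> S y - S z \<le> (z - y) * S y / l y"
  shows "lam * ln (S p) + ln (l p) \<le> lam * ln (S q) + ln (l q)"
proof (rule le_if_local_decrease_quadratic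
    [where g = "\<lambda>t. lam * ln (S t) + ln (l t)" and \<eta> = "l p / 2" and K = "4 / (l p)\<^sup>2"])
  fix y z assume y: "p \<le> y" and yz: "y \<le> z" and z: "z \<le> q" and short: "z - y \<le> l p / 2"
  have ly: "l p \<le> l y" using l_affine[where y = p and z = y] y lam by simp
  have "lam * ln (S y) + ln (l y) \<le> lam * ln (S z) + ln (l z) + 4 * ((z - y) / l y)\<^sup>2"
  proof (rule tangent_log_step[OF lam])
    show "S y * (1 - (z - y) / l y) \<le> S z"
      using decrement[OF y yz z] ly \<open>0 < l p\<close> by (simp add: field_simps)
  qed (use S_pos y yz z ly short \<open>0 < l p\<close> l_affine[where y = y and z = z] in auto)
  moreover have "((z - y) / l y)\<^sup>2 \<le> ((z - y) / l p)\<^sup>2"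
    using yz ly \<open>0 < l p\<close> by (intro power_mono divide_left_mono) auto
  ultimately show "lam * ln (S y) + ln (l y) - (lam * ln (S z) + ln (l z)) \<le> 4 / (l p)\<^sup>2 * (z - y)\<^sup>2"
    by (simp add: power_divide)
qed (use \<open>p \<le> q\<close> \<open>0 < l p\<close> in auto)

lemma log_tangent_antimono_right:
  fixes S l :: "real \<Rightarrow> real"
  assumes lam: "0 < lam" "lam \<le> 1" and "p \<le> q" and "0 < l p"
    and l_affine: "\<And>y z. l z = l y + lam * (z - y)"
    and S_pos: "\<And>t. p \<le> t \<Longrightarrow> t \<le> q \<Longrightarrow> 0 < S t"
    and decrement: "\<And>y z. p \<le> y \<Longrightarrow> y \<le> z \<Longrightarrow> z \<le> q \<Longrightarrow> (z - y) * S z / l z \<le> S y - S z"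
  shows "lam * ln (S q) + ln (l q) \<le> lam * ln (S p) + ln (l p)"
proof -
  have "- (lam * ln (S p) + ln (l p)) \<le> - (lam * ln (S q) + ln (l q))"
  proof (rule le_if_local_decrease_quadratic
      [where g = "\<lambda>t. - (lam * ln (S t) + ln (l t))" and \<eta> = "l p / 2" and K = "4 / (l p)\<^sup>2"])
    fix y z assume y: "p \<le> y" and yz: "y \<le> z" and z: "z \<le> q" and short: "z - y \<le> l p / 2"
    have lz: "l p \<le> l z" using l_affine[where y = p and z = z] y yz lam by simp
    have "lam * ln (S z) + ln (l z) \<le> lam * ln (S y) + ln (l y) + 4 * ((y - z) / l z)\<^sup>2"
    proof (rule tangent_log_step[OF lam])
      show "S z * (1 - (y - z) / l z) \<le> S y"
        using decrement[OF y yz z] lz \<open>0 < l p\<close> by (simp add: field_simps)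
    qed (use S_pos y yz z lz short \<open>0 < l p\<close> l_affine[where y = z and z = y] in auto)
    moreover have "((y - z) / l z)\<^sup>2 \<le> ((z - y) / l p)\<^sup>2"
    proof -
      have "((y - z) / l z)\<^sup>2 = ((z - y) / l z)\<^sup>2" by (simp add: power_divide power2_commute)
      also have "\<dots> \<le> ((z - y) / l p)\<^sup>2"
        using yz lz \<open>0 < l p\<close> by (intro power_mono divide_left_mono) auto
      finally show ?thesis .
    qed
    ultimately show "- (lam * ln (S y) + ln (l y)) - - (lam * ln (S z) + ln (l z))
        \<le> 4 / (l p)\<^sup>2 * (z - y)\<^sup>2"
      by (simp add: power_divide)
  qed (use \<open>p \<le> q\<close> \<open>0 < l p\<close> in auto)
  then show ?thesis by simp
qed

lemma nn_integral_affine_powr_tail: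
  fixes A b a x0 :: real
  assumes "0 < A" "0 < b" "1 < a"
  shows "(\<integral>\<^sup>+ t. ennreal ((A + b * (t - x0)) powr (- a)) * indicator {x0..} t \<partial>lborel)
    = ennreal (A powr (1 - a) / (b * (a - 1)))"
proof -
  define l where "l t = A + b * (t - x0)" for t
  define F where "F t = - (l t powr (1 - a) / (b * (a - 1)))" for t
  have l_pos: "0 < l t" if "x0 \<le> t" for t
    using assms that by (simp add: l_def add_pos_nonneg)
  have "(\<integral>\<^sup>+ t. ennreal (l t powr (- a)) * indicator {x0..} t \<partial>lborel) = 0 - F x0"
  proof (rule nn_integral_FTC_atLeast)
    show "(\<lambda>t. l t powr (- a)) \<in> borel_measurable borel" unfolding l_def by measurable
    show "DERIV F t :> l t powr (- a)" if "x0 \<le> t" for t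
    proof -
      have "DERIV F t :> - ((1 - a) * l t powr (1 - a - 1) * b) / (b * (a - 1))"
        unfolding F_def l_def using l_pos[OF that] assms
        by (auto intro!: derivative_eq_intros simp: l_def)
      moreover have "- ((1 - a) * x * b) / (b * (a - 1)) = x" for x
      proof -
        have "- ((1 - a) * x * b) = (b * (a - 1)) * x" by (simp add: algebra_simps)
        then show ?thesis using assms by simp
      qed
      ultimately show ?thesis by simp
    qed
    have "l = (\<lambda>t. (A - b * x0) + b * t)" by (auto simp: l_def algebra_simps)
    moreover have "filterlim (\<lambda>t. (A - b * x0) + b * t) at_top at_top"
      using \<open>0 < b\<close> by (intro filterlim_tendsto_add_at_top[OF tendsto_const]
          filterlim_tendsto_pos_mult_at_top[OF tendsto_const _ filterlim_ident])
    ultimately have "filterlim l at_top at_top" by simp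
    then have "((\<lambda>t. l t powr (1 - a)) \<longlongrightarrow> 0) at_top"
      using \<open>1 < a\<close> by (intro tendsto_neg_powr) auto
    then have "((\<lambda>t. - (l t powr (1 - a) / (b * (a - 1)))) \<longlongrightarrow> - 0) at_top"
      by (intro tendsto_minus tendsto_divide_zero)
    then show "(F \<longlongrightarrow> 0) at_top" by (simp add: F_def[abs_def])
  qed (auto simp: l_def)
  also have "0 - F x0 = A powr (1 - a) / (b * (a - 1))"
    by (simp add: F_def l_def)
  finally show ?thesis by (simp add: l_def)
qed

definition survival :: "(real \<Rightarrow> real) \<Rightarrow> real \<Rightarrow> real" where
  "survival f t = measure (dist_of f) {t..}"

lemma sets_dist_of [simp, measurable_cong]: "sets (dist_of f) = sets borel"
  and space_dist_of [simp]: "space (dist_of f) = UNIV"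
  by (auto simp: dist_of_def)

lemma emeasure_dist_of:
  assumes "f \<in> borel_measurable borel" and "A \<in> sets borel"
  shows "emeasure (dist_of f) A = (\<integral>\<^sup>+ x. ennreal (f x) * indicator A x \<partial>lborel)"
  using assms by (simp add: dist_of_def emeasure_density)

lemma survival_le_1: "prob_space (dist_of f) \<Longrightarrow> survival f t \<le> 1"
  by (simp add: survival_def prob_space.prob_le_1)

lemma survival_diff_eq_nn_integral:
  assumes "f \<in> borel_measurable borel" and "prob_space (dist_of f)" and "y \<le> z"
  shows "ennreal (survival f y - survival f z) = (\<integral>\<^sup>+ t. ennreal (f t) * indicator {y..<z} t \<partial>lborel)"
proof -
  interpret prob_space "dist_of f" by fact
  have "{y..} = {y..<z} \<union> {z..}" using \<open>y \<le> z\<close> by auto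
  then have "survival f y - survival f z = measure (dist_of f) {y..<z}"
    by (simp add: survival_def finite_measure_Union ivl_disj_int)
  then show ?thesis
    using emeasure_dist_of[OF assms(1)] by (simp add: emeasure_eq_measure)
qed

lemma survival_antimono:
  assumes "prob_space (dist_of f)" and "y \<le> z"
  shows "survival f z \<le> survival f y"
  using assms by (simp add: survival_def prob_space.finite_measure finite_measure.finite_measure_mono)

lemma survival_diff_le:
  assumes "f \<in> borel_measurable borel" and "prob_space (dist_of f)" and "y \<le> z"
    and "0 \<le> B" and "\<And>t. y \<le> t \<Longrightarrow> t < z \<Longrightarrow> f t \<le> B"
  shows "survival f y - survival f z \<le> (z - y) * B"
proof -
  have "ennreal (survival f y - survival f z) \<le> (\<integral>\<^sup>+ t. ennreal B * indicator {y..<z} t \<partial>lborel)"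
    unfolding survival_diff_eq_nn_integral[OF assms(1-3)]
    by (intro nn_integral_mono) (auto simp: indicator_def assms(5) ennreal_leI)
  also have "\<dots> = ennreal ((z - y) * B)"
    using assms(3,4) by (simp add: nn_integral_cmult_indicator ennreal_mult' mult.commute)
  finally show ?thesis using assms(3,4) by (simp add: ennreal_le_iff)
qed

lemma survival_diff_ge:
  assumes "f \<in> borel_measurable borel" and "prob_space (dist_of f)" and "y \<le> z"
    and "0 \<le> B" and "\<And>t. y \<le> t \<Longrightarrow> t < z \<Longrightarrow> B \<le> f t"
  shows "(z - y) * B \<le> survival f y - survival f z"
proof -
  have "ennreal ((z - y) * B) = (\<integral>\<^sup>+ t. ennreal B * indicator {y..<z} t \<partial>lborel)"
    using assms(3,4) by (simp add: nn_integral_cmult_indicator ennreal_mult' mult.commute)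
  also have "\<dots> \<le> ennreal (survival f y - survival f z)"
    unfolding survival_diff_eq_nn_integral[OF assms(1-3)]
    by (intro nn_integral_mono) (auto simp: indicator_def assms(5) ennreal_leI)
  finally show ?thesis
    using survival_antimono[OF assms(2,3)] by (simp add: ennreal_le_iff)
qed

lemma survival_eq_1_minus_cdf:
  assumes "f \<in> borel_measurable borel" and "prob_space (dist_of f)"
  shows "survival f x = 1 - cdf_of f x"
proof -
  interpret prob_space "dist_of f" by fact
  have "emeasure (dist_of f) {x} = (\<integral>\<^sup>+ t. ennreal (f t) * indicator {x} t \<partial>lborel)"
    using emeasure_dist_of[OF assms(1)] by simp
  also have "\<dots> = (\<integral>\<^sup>+ t. 0 \<partial>(lborel :: real measure))"
    using AE_lborel_singleton[of x] by (intro nn_integral_cong_AE) (auto elim!: eventually_mono)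
  finally have no_atom: "measure (dist_of f) {x} = 0" by (simp add: measure_def)
  have "cdf_of f x + measure (dist_of f) {x<..} = measure (dist_of f) ({..x} \<union> {x<..})"
    unfolding cdf_of_def by (subst finite_measure_Union) auto
  also have "{..x} \<union> {x<..} = UNIV" by auto
  also have "measure (dist_of f) UNIV = 1" using prob_space by simp
  finally have "cdf_of f x + measure (dist_of f) {x<..} = 1" .
  moreover have "survival f x = measure (dist_of f) ({x} \<union> {x<..})"
    unfolding survival_def by (simp only: ivl_disj_un_singleton(1))
  ultimately show ?thesis using no_atom finite_measure_Union[of "{x}" "{x<..}"] by simp
qed

lemma nn_integral_layer_cake:
  fixes M :: "real measure"
  assumes "finite_measure M" and sets_M: "sets M = sets borel"
  shows "(\<integral>\<^sup>+ x. ennreal x \<partial>M) = (\<integral>\<^sup>+ t. ennreal (measure M {t..}) * indicator {0..} t \<partial>lborel)"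
proof -
  interpret M: finite_measure M by fact
  interpret pair_sigma_finite M "lborel :: real measure" ..
  define g :: "real \<Rightarrow> real \<Rightarrow> ennreal" where "g x t = indicator {(x, t). 0 \<le> t \<and> t \<le> x} (x, t)" for x t
  have "case_prod g \<in> borel_measurable (borel \<Otimes>\<^sub>M borel)"
    unfolding g_def by measurable
  moreover have "sets (M \<Otimes>\<^sub>M lborel) = sets (borel \<Otimes>\<^sub>M (borel :: real measure))"
    using sets_M by (intro sets_pair_measure_cong) auto
  ultimately have g: "case_prod g \<in> borel_measurable (M \<Otimes>\<^sub>M lborel)"
    using measurable_cong_sets[OF _ refl] by blast
  have "(\<integral>\<^sup>+ x. ennreal x \<partial>M) = (\<integral>\<^sup>+ x. (\<integral>\<^sup>+ t. g x t \<partial>lborel) \<partial>M)"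
  proof (rule nn_integral_cong)
    fix x :: real
    have "(\<integral>\<^sup>+ t. g x t \<partial>lborel) = (\<integral>\<^sup>+ t. indicator {0..x} t \<partial>lborel)"
      unfolding g_def by (intro nn_integral_cong) (auto simp: indicator_def)
    then show "ennreal x = (\<integral>\<^sup>+ t. g x t \<partial>lborel)"
      by (cases "0 \<le> x") (auto simp: ennreal_neg)
  qed
  also have "\<dots> = (\<integral>\<^sup>+ t. (\<integral>\<^sup>+ x. g x t \<partial>M) \<partial>lborel)"
    using Fubini'[OF g] by simp
  also have "\<dots> = (\<integral>\<^sup>+ t. ennreal (measure M {t..}) * indicator {0..} t \<partial>lborel)"
  proof (rule nn_integral_cong)
    fix t :: real
    have "(\<integral>\<^sup>+ x. g x t \<partial>M) = (\<integral>\<^sup>+ x. indicator {0..} t * indicator {t..} x \<partial>M)"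
      unfolding g_def by (intro nn_integral_cong) (auto simp: indicator_def)
    also have "\<dots> = indicator {0..} t * emeasure M {t..}"
      using sets_M by (subst nn_integral_cmult_indicator) auto
    finally show "(\<integral>\<^sup>+ x. g x t \<partial>M) = ennreal (measure M {t..}) * indicator {0..} t"
      by (simp add: M.emeasure_eq_measure mult.commute)
  qed
  finally show ?thesis .
qed

lemma OPT_le_mean:
  assumes "prob_space (dist_of f)" and "integrable (dist_of f) (\<lambda>x. x)"
    and "AE x in dist_of f. 0 \<le> x"
  shows "OPT f \<le> (\<integral>x. x \<partial>dist_of f)"
  unfolding OPT_def
proof (rule cSUP_least)
  interpret prob_space "dist_of f" by fact
  fix p :: real assume "p \<in> {0..}"
  show "REV f p \<le> (\<integral>x. x \<partial>dist_of f)"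
  proof (cases "p = 0")
    case True
    then show ?thesis using integral_nonneg_AE[OF assms(3)] by (simp add: REV_def)
  next
    case False
    with \<open>p \<in> {0..}\<close> have "0 < p" by simp
    have "measure (dist_of f) {x \<in> space (dist_of f). p \<le> x} \<le> (\<integral>x. x \<partial>dist_of f) / p"
      using integral_Markov_inequality_measure[OF assms(2) _ assms(3) \<open>0 < p\<close>, of UNIV] by simp
    moreover have "{x \<in> space (dist_of f). p \<le> x} = {p..}" by auto
    ultimately show ?thesis using \<open>0 < p\<close> by (simp add: REV_def field_simps)
  qed
qed simp

locale lambda_regular_distribution =
  fixes lam :: real and f :: "real \<Rightarrow> real" and D :: "real set" and \<mu> :: real
  assumes lam_pos: "0 < lam" and lam_le_1: "lam \<le> 1"
    and f_borel: "f \<in> borel_measurable borel"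
    and prob: "prob_space (dist_of f)"
    and D_interval: "is_interval D" and D_nonneg: "D \<subseteq> {0..}"
    and f_pos: "\<And>x. x \<in> D \<Longrightarrow> 0 < f x" and f_zero: "\<And>x. x \<notin> D \<Longrightarrow> f x = 0"
    and regular: "lambda_regular lam f D"
    and integrable_value: "integrable (dist_of f) (\<lambda>x. x)"
    and mean: "\<mu> = (\<integral>x. x \<partial>dist_of f)"
begin

sublocale M: prob_space "dist_of f" by (fact prob)

lemma AE_in_D: "AE x in dist_of f. x \<in> D"
proof -
  have "AE x in lborel. 0 < ennreal (f x) \<longrightarrow> x \<in> D" using f_zero by force
  then show ?thesis unfolding dist_of_def using f_borel by (subst AE_density) auto
qed

lemma AE_nonneg: "AE x in dist_of f. 0 \<le> x"
  using AE_in_D D_nonneg by (auto elim!: eventually_mono)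

lemma survival_0: "survival f 0 = 1"
  using AE_nonneg by (simp add: survival_def M.prob_eq_1)

lemma not_AE_less_mean: "\<not> (AE x in dist_of f. x < \<mu>)"
  using M.expectation_less[OF integrable_value] mean by auto

lemma not_AE_greater_mean: "\<not> (AE x in dist_of f. \<mu> < x)"
  using M.expectation_greater[OF integrable_value] mean by auto

lemma mean_in_D: "\<mu> \<in> D"
proof -
  have "\<exists>d\<in>D. d \<le> \<mu>"
  proof (rule ccontr)
    assume "\<not> ?thesis"
    then have "AE x in dist_of f. \<mu> < x" using AE_in_D by (auto elim!: eventually_mono)
    with not_AE_greater_mean show False ..
  qed
  moreover have "\<exists>d\<in>D. \<mu> \<le> d"
  proof (rule ccontr)
    assume "\<not> ?thesis"
    then have "AE x in dist_of f. x < \<mu>" using AE_in_D by (auto elim!: eventually_mono)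
    with not_AE_less_mean show False ..
  qed
  ultimately show ?thesis using D_interval unfolding is_interval_1 by blast
qed

lemma survival_eq_0_iff: "survival f t = 0 \<longleftrightarrow> (AE x in dist_of f. x < t)"
proof -
  have "survival f t = 0 \<longleftrightarrow> {t..} \<in> null_sets (dist_of f)"
    by (auto simp: survival_def M.emeasure_eq_measure)
  also have "\<dots> \<longleftrightarrow> (AE x in dist_of f. x \<notin> {t..})" by (simp add: AE_iff_null_sets)
  finally show ?thesis by (simp add: not_le)
qed

lemma survival_mean_pos: "0 < survival f \<mu>"
proof -
  have "survival f \<mu> \<noteq> 0" using survival_eq_0_iff[of \<mu>] not_AE_less_mean by simp
  then show ?thesis by (simp add: survival_def less_le)
qed

lemma in_D_if_survival_pos:
  assumes "\<mu> \<le> t" and "0 < survival f t"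
  shows "t \<in> D"
proof (rule ccontr)
  assume "t \<notin> D"
  then have "\<forall>d\<in>D. d < t"
    using D_interval mean_in_D assms(1) unfolding is_interval_1 by (meson not_less order_trans)
  then have "AE x in dist_of f. x < t" using AE_in_D by (auto elim!: eventually_mono)
  with assms(2) survival_eq_0_iff[of t] show False by simp
qed

lemma virtual_value_mono:
  assumes "x \<in> D" and "y \<in> D" and "x \<le> y"
  shows "lam * x - survival f x / f x \<le> lam * y - survival f y / f y"
  using mono_onD[OF regular[unfolded lambda_regular_def] assms]
  by (simp add: survival_eq_1_minus_cdf[OF f_borel prob])

definition tangent :: "real \<Rightarrow> real" where
  "tangent t = survival f \<mu> / f \<mu> + lam * (t - \<mu>)"

definition peak :: real where
  "peak = survival f \<mu> powr lam * tangent \<mu>"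

lemma tangent_affine: "tangent z = tangent y + lam * (z - y)"
  by (simp add: tangent_def algebra_simps)

lemma tangent_mono: "y \<le> z \<Longrightarrow> tangent y \<le> tangent z"
  using lam_pos by (simp add: tangent_def)

lemma tangent_mean_pos: "0 < tangent \<mu>"
  using survival_mean_pos f_pos[OF mean_in_D] by (simp add: tangent_def)

lemma peak_pos: "0 < peak"
  using survival_mean_pos tangent_mean_pos by (simp add: peak_def)

lemma f_mult_tangent_le_survival:
  assumes "t \<in> D" and "t \<le> \<mu>"
  shows "f t * tangent t \<le> survival f t"
proof -
  have "tangent t \<le> survival f t / f t"
    using virtual_value_mono[OF assms(1) mean_in_D assms(2)] by (simp add: tangent_def algebra_simps)
  then show ?thesis using f_pos[OF assms(1)] by (simp add: pos_le_divide_eq mult.commute)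
qed

lemma survival_le_f_mult_tangent:
  assumes "t \<in> D" and "\<mu> \<le> t"
  shows "survival f t \<le> f t * tangent t"
proof -
  have "survival f t / f t \<le> tangent t"
    using virtual_value_mono[OF mean_in_D assms(1) assms(2)] by (simp add: tangent_def algebra_simps)
  then show ?thesis using f_pos[OF assms(1)] by (simp add: pos_divide_le_eq mult.commute)
qed

lemma log_tangent_le_left:
  assumes "p \<le> \<mu>" and "0 < tangent p"
  shows "lam * ln (survival f p) + ln (tangent p) \<le> lam * ln (survival f \<mu>) + ln (tangent \<mu>)"
proof (rule log_tangent_mono_left[OF lam_pos lam_le_1 assms tangent_affine])
  show "0 < survival f t" if "p \<le> t" "t \<le> \<mu>" for t
    using survival_antimono[OF prob that(2)] survival_mean_pos by simp
  fix y z assume y: "p \<le> y" and yz: "y \<le> z" and z: "z \<le> \<mu>"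
  have ty: "0 < tangent y" using tangent_mono[OF y] assms(2) by simp
  have "survival f y - survival f z \<le> (z - y) * (survival f y / tangent y)"
  proof (rule survival_diff_le[OF f_borel prob yz])
    show "0 \<le> survival f y / tangent y" using ty by (simp add: survival_def)
    fix t assume t: "y \<le> t" "t < z"
    show "f t \<le> survival f y / tangent y"
    proof (cases "t \<in> D")
      case True
      have "f t * tangent y \<le> f t * tangent t"
        using f_pos[OF True] tangent_mono[OF t(1)] by (intro mult_left_mono) auto
      also have "\<dots> \<le> survival f t" using f_mult_tangent_le_survival[OF True] t z by simp
      also have "\<dots> \<le> survival f y" using survival_antimono[OF prob t(1)] .
      finally show ?thesis using ty by (simp add: pos_le_divide_eq)
    next
      case False
      then show ?thesis using f_zero ty by (simp add: survival_def)
    qed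
  qed
  then show "survival f y - survival f z \<le> (z - y) * survival f y / tangent y" by simp
qed

lemma log_tangent_le_right:
  assumes "\<mu> \<le> r" and "0 < survival f r"
  shows "lam * ln (survival f r) + ln (tangent r) \<le> lam * ln (survival f \<mu>) + ln (tangent \<mu>)"
proof (rule log_tangent_antimono_right[OF lam_pos lam_le_1 assms(1) tangent_mean_pos tangent_affine])
  show "0 < survival f t" if "\<mu> \<le> t" "t \<le> r" for t
    using survival_antimono[OF prob that(2)] assms(2) by simp
  fix y z assume y: "\<mu> \<le> y" and yz: "y \<le> z" and z: "z \<le> r"
  have Sz: "0 < survival f z" using survival_antimono[OF prob z] assms(2) by simp
  have "(z - y) * (survival f z / tangent z) \<le> survival f y - survival f z"
  proof (rule survival_diff_ge[OF f_borel prob yz])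
    show "0 \<le> survival f z / tangent z"
      using Sz tangent_mono[of \<mu> z] tangent_mean_pos y yz by simp
    fix t assume t: "y \<le> t" "t < z"
    have St: "survival f z \<le> survival f t" using survival_antimono[OF prob, of t z] t by simp
    have tt: "0 < tangent t" using tangent_mono[of \<mu> t] tangent_mean_pos y t by simp
    have "t \<in> D" using in_D_if_survival_pos[of t] St Sz y t by simp
    have "survival f z / tangent z \<le> survival f t / tangent t"
      using St Sz tt tangent_mono[of t z] t by (intro frac_le) auto
    also have "\<dots> \<le> f t"
      using survival_le_f_mult_tangent[OF \<open>t \<in> D\<close>] y t tt by (simp add: pos_divide_le_eq)
    finally show "survival f z / tangent z \<le> f t" .
  qed
  then show "(z - y) * survival f z / tangent z \<le> survival f y - survival f z" by simp
qed

lemma survival_powr_tangent_le_peak: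
  assumes "0 < tangent t"
  shows "survival f t powr lam * tangent t \<le> peak"
proof (cases "survival f t = 0")
  case True
  then show ?thesis using peak_pos by simp
next
  case False
  then have St: "0 < survival f t" by (simp add: survival_def less_le)
  have "lam * ln (survival f t) + ln (tangent t) \<le> lam * ln (survival f \<mu>) + ln (tangent \<mu>)"
    using log_tangent_le_left[OF _ assms] log_tangent_le_right[OF _ St] by (cases "t \<le> \<mu>") auto
  then have "ln (survival f t powr lam * tangent t) \<le> ln peak"
    using St assms survival_mean_pos tangent_mean_pos by (simp add: peak_def ln_mult)
  then show ?thesis using St assms peak_pos by simp
qed

lemma tangent_0_le_peak: "tangent 0 \<le> peak"
  using survival_powr_tangent_le_peak[of 0] survival_0 peak_pos by (cases "0 < tangent 0") auto

lemma mean_le_tail_bound: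
  assumes "lam < 1" and x0: "tangent x0 = peak"
  shows "\<mu> \<le> x0 + peak / (1 - lam)"
proof -
  have "0 \<le> x0"
    using tangent_0_le_peak tangent_affine[of x0 0] x0 lam_pos by (simp add: zero_le_mult_iff)
  \<comment> \<open>\<open>G t = (peak / tangent t) powr (1/lam)\<close>, which equals 1 at \<open>x0\<close>\<close>
  define G where "G t = peak powr (1/lam) * (peak + lam * (t - x0)) powr (- (1/lam))" for t
  have survival_le_G: "survival f t \<le> G t" if "x0 \<le> t" for t
  proof -
    have tangent_t: "tangent t = peak + lam * (t - x0)"
      using tangent_affine[of t x0] x0 by simp
    then have tt: "0 < tangent t" using that peak_pos lam_pos by (simp add: add_pos_nonneg)
    have "survival f t powr lam \<le> peak / tangent t"
      using survival_powr_tangent_le_peak[OF tt] tt by (simp add: pos_le_divide_eq)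
    then have "(survival f t powr lam) powr (1/lam) \<le> (peak / tangent t) powr (1/lam)"
      using lam_pos by (intro powr_mono2) auto
    then show ?thesis
      using lam_pos tt peak_pos
      by (simp add: powr_powr G_def tangent_t powr_divide powr_minus_divide survival_def)
  qed
  have "ennreal \<mu> = (\<integral>\<^sup>+ x. ennreal x \<partial>dist_of f)"
    using nn_integral_eq_integral[OF integrable_value AE_nonneg] mean by simp
  also have "\<dots> = (\<integral>\<^sup>+ t. ennreal (survival f t) * indicator {0..} t \<partial>lborel)"
    unfolding survival_def by (rule nn_integral_layer_cake) (auto intro: M.finite_measure_axioms)
  also have "\<dots> \<le> (\<integral>\<^sup>+ t. indicator {0..<x0} t + ennreal (G t) * indicator {x0..} t \<partial>lborel)"
    using survival_le_G survival_le_1[OF prob]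
    by (intro nn_integral_mono) (auto simp: indicator_def ennreal_leI)
  also have "\<dots> = ennreal x0 + (\<integral>\<^sup>+ t. ennreal (G t) * indicator {x0..} t \<partial>lborel)"
    using \<open>0 \<le> x0\<close> by (subst nn_integral_add) (auto simp: G_def)
  also have "(\<integral>\<^sup>+ t. ennreal (G t) * indicator {x0..} t \<partial>lborel)
      = ennreal (peak powr (1/lam)) * (\<integral>\<^sup>+ t. ennreal ((peak + lam * (t - x0)) powr (- (1/lam)))
          * indicator {x0..} t \<partial>lborel)"
    by (subst nn_integral_cmult[symmetric]) (auto simp: G_def ennreal_mult mult.assoc)
  also have "\<dots> = ennreal (peak powr (1/lam) * (peak powr (1 - 1/lam) / (lam * (1/lam - 1))))"
    using nn_integral_affine_powr_tail[OF peak_pos lam_pos, of "1/lam" x0] lam_pos \<open>lam < 1\<close>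
    by (simp add: ennreal_mult'[symmetric])
  also have "peak powr (1/lam) * (peak powr (1 - 1/lam) / (lam * (1/lam - 1))) = peak / (1 - lam)"
  proof -
    have "lam * (1/lam - 1) = 1 - lam" using lam_pos by (simp add: field_simps)
    moreover have "peak powr (1/lam) * peak powr (1 - 1/lam) = peak"
      using peak_pos by (simp add: powr_add[symmetric])
    ultimately show ?thesis by simp
  qed
  finally show ?thesis
    using \<open>0 \<le> x0\<close> peak_pos \<open>lam < 1\<close> by (simp add: ennreal_plus[symmetric] del: ennreal_plus)
qed

lemma survival_mean_ge:
  assumes "lam < 1"
  shows "(1 - lam) powr (1/lam) \<le> survival f \<mu>"
proof -
  have "tangent (\<mu> - (tangent \<mu> - peak) / lam) = peak"
    using lam_pos tangent_affine[of "\<mu> - (tangent \<mu> - peak) / lam" \<mu>] by simp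
  from mean_le_tail_bound[OF assms this]
  have "(tangent \<mu> - peak) / lam \<le> peak / (1 - lam)" by simp
  then have "(1 - lam) * tangent \<mu> \<le> peak"
    using lam_pos assms by (simp add: field_simps)
  then have "1 - lam \<le> survival f \<mu> powr lam"
    using tangent_mean_pos by (simp add: peak_def)
  then have "(1 - lam) powr (1/lam) \<le> (survival f \<mu> powr lam) powr (1/lam)"
    using assms lam_pos by (intro powr_mono2) auto
  then show ?thesis using lam_pos survival_mean_pos by (simp add: powr_powr)
qed

end

theorem corollary3:
  fixes lam \<mu> :: real and f :: "real \<Rightarrow> real" and D :: "real set"
  assumes "0 < lam" and "lam \<le> 1"
    and "f \<in> borel_measurable borel" and "\<forall>x. 0 \<le> f x"
    and "prob_space (dist_of f)"
    and "is_interval D" and "D \<subseteq> {0..}"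
    and "\<forall>x\<in>D. 0 < f x" and "\<forall>x. x \<notin> D \<longrightarrow> f x = 0"
    and "lambda_regular lam f D"
    and "integrable (dist_of f) (\<lambda>x. x)"
    and "\<mu> = integral\<^sup>L (dist_of f) (\<lambda>x. x)" and "0 < \<mu>"
  shows "ereal (OPT f / REV f \<mu>) \<le>
           (if lam = 1 then \<infinity> else ereal ((1 - lam) powr (- 1 / lam)))"
proof (cases "lam = 1")
  case True
  then show ?thesis by simp
next
  case False
  \<comment> \<open>\<open>dist_of f\<close> only sees \<open>ennreal (f x)\<close>\<close>
  interpret lambda_regular_distribution lam f D \<mu>
    using assms(8,9) by (intro lambda_regular_distribution.intro[OF assms(1-3,5-7) _ _ assms(10-12)]) auto
  have REV: "REV f \<mu> = \<mu> * survival f \<mu>" by (simp add: REV_def survival_def)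
  have "OPT f / REV f \<mu> \<le> \<mu> / REV f \<mu>"
    using OPT_le_mean[OF prob integrable_value AE_nonneg] mean REV survival_mean_pos \<open>0 < \<mu>\<close>
    by (intro divide_right_mono) auto
  also have "\<dots> = 1 / survival f \<mu>" using REV \<open>0 < \<mu>\<close> by simp
  also have "\<dots> \<le> 1 / (1 - lam) powr (1 / lam)"
    using survival_mean_ge survival_mean_pos False \<open>lam \<le> 1\<close> by (intro divide_left_mono) auto
  also have "\<dots> = (1 - lam) powr (- 1 / lam)" by (simp add: powr_minus_divide)
  finally show ?thesis using False by simp
qed

end
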